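(* Let $f : \{0, 1\}^n \to \{0, 1\}$ be a Boolean function. Then $\mathsf{D}_{\mathrm{cc}}^\rightarrow(f \circ \mathsf{AND}) = \lceil\log(\mathsf{Pat}^{\mathsf{M}}(f))\rceil$.
   Context: Every $f:\{0,1\}^n\to\{0,1\}$ has a unique M\"obius expansion $f=\sum_{S\subseteq[n]}\widetilde f(S)\mathsf{AND}_S$ with real coefficients, where $\mathsf{AND}_S(x)=\prod_{i\in S}x_i$; its M\"obius support is $\mathcal{S}_f=\{S:\widetilde f(S)\ne0\}$. The pattern of $x\in\{0,1\}^n$ is the vector $(\mathsf{AND}_S(x))_{S\in\mathcal S_f}\in\{0,1\}^{\mathcal S_f}$, and the M\"obius pattern complexity $\mathsf{Pat}^{\mathsf{M}}(f)$ is the number of distinct patterns over all $x\in\{0,1\}^n$. $f\circ\mathsf{AND}$ is the two-party function $(x,y)\mapsto f(x_1\wedge y_1,\dots,x_n\wedge y_n)$ (Alice holds $x$, Bob $y$); $\mathsf{D}_{\mathrm{cc}}^\rightarrow$ is deterministic one-way communication complexity. Logarithms are base 2. *)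

theory Defs
  imports Complex_Main
begin

text \<open>A point x of {0,1}^n is encoded by the set of its coordinates equal to 1,
  i.e. a subset of {..<n}.  A Boolean function f : {0,1}^n -> {0,1} is a map
  nat set => bool, only its values on subsets of {..<n} matter.\<close>

definition AND_S :: "nat set \<Rightarrow> nat set \<Rightarrow> bool" where
  "AND_S S x \<longleftrightarrow> S \<subseteq> x"

definition mobius_coeff :: "nat \<Rightarrow> (nat set \<Rightarrow> bool) \<Rightarrow> nat set \<Rightarrow> real" where
  "mobius_coeff n f = (THE c. (\<forall>S. \<not> S \<subseteq> {..<n} \<longrightarrow> c S = 0) \<and>
      (\<forall>x. x \<subseteq> {..<n} \<longrightarrow>
          of_bool (f x) = (\<Sum>S\<in>Pow {..<n}. c S * of_bool (AND_S S x))))"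

definition mobius_support :: "nat \<Rightarrow> (nat set \<Rightarrow> bool) \<Rightarrow> nat set set" where
  "mobius_support n f = {S. S \<subseteq> {..<n} \<and> mobius_coeff n f S \<noteq> 0}"

definition pattern :: "nat \<Rightarrow> (nat set \<Rightarrow> bool) \<Rightarrow> nat set \<Rightarrow> (nat set \<Rightarrow> bool)" where
  "pattern n f x = (\<lambda>S. if S \<in> mobius_support n f then AND_S S x else undefined)"

definition Pat_M :: "nat \<Rightarrow> (nat set \<Rightarrow> bool) \<Rightarrow> nat" where
  "Pat_M n f = card (pattern n f ` Pow {..<n})"

definition one_way_protocol :: "nat \<Rightarrow> (nat set \<Rightarrow> nat set \<Rightarrow> bool) \<Rightarrow> nat \<Rightarrow> bool" where
  "one_way_protocol n F k \<longleftrightarrow> (\<exists>(M :: nat set \<Rightarrow> bool list) (B :: bool list \<Rightarrow> nat set \<Rightarrow> bool).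
     (\<forall>x. x \<subseteq> {..<n} \<longrightarrow> length (M x) = k) \<and>
     (\<forall>x y. x \<subseteq> {..<n} \<longrightarrow> y \<subseteq> {..<n} \<longrightarrow> F x y = B (M x) y))"

definition D_oneway :: "nat \<Rightarrow> (nat set \<Rightarrow> nat set \<Rightarrow> bool) \<Rightarrow> nat" where
  "D_oneway n F = (LEAST k. one_way_protocol n F k)"

definition comp_AND :: "(nat set \<Rightarrow> bool) \<Rightarrow> nat set \<Rightarrow> nat set \<Rightarrow> bool" where
  "comp_AND f x y = f (x \<inter> y)"

end

theory Submission
  imports Defs "HOL-Library.Log_Nat"
begin

text \<open>By Moebius inversion f has a unique expansion f = sum_S c_S AND_S. Hence the row
  y |-> f (x \<inter> y) of the communication matrix of f \<circ> AND equals
  sum_S c_S [S \<subseteq> x] [S \<subseteq> y] and is determined by the pattern of x; conversely, uniqueness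
  of the expansion, applied to the difference of two equal rows, forces equal patterns. So the
  matrix has exactly Pat^M(f) distinct rows, and a k-bit one-way protocol exists iff the number
  of distinct rows is at most 2^k.\<close>

lemma sum_Pow_AND_S:
  fixes d :: "nat set \<Rightarrow> 'a::semiring_1"
  assumes "finite A" and "y \<subseteq> A"
  shows "(\<Sum>S\<in>Pow A. d S * of_bool (AND_S S y)) = (\<Sum>S\<in>Pow y. d S)"
proof -
  have "(\<Sum>S\<in>Pow A. d S * of_bool (AND_S S y)) = (\<Sum>S\<in>Pow A. if S \<subseteq> y then d S else 0)"
    by (intro sum.cong) (auto simp: AND_S_def)
  also have "\<dots> = (\<Sum>S\<in>{S\<in>Pow A. S \<subseteq> y}. d S)"
    by (rule sum.inter_filter[symmetric]) (use assms(1) in simp)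
  also have "{S\<in>Pow A. S \<subseteq> y} = Pow y"
    using assms(2) by auto
  finally show ?thesis .
qed

lemma AND_S_combination_eq_0_imp_coeff_eq_0:
  fixes d :: "nat set \<Rightarrow> 'a::comm_ring_1"
  assumes A: "finite A"
    and vanish: "\<And>y. y \<subseteq> A \<Longrightarrow> (\<Sum>S\<in>Pow A. d S * of_bool (AND_S S y)) = 0"
    and "S \<subseteq> A"
  shows "d S = 0"
proof -
  have "finite S"
    using A \<open>S \<subseteq> A\<close> finite_subset by blast
  then show ?thesis
    using \<open>S \<subseteq> A\<close>
  proof (induction S rule: finite_psubset_induct)
    case (psubset S)
    have "(\<Sum>T\<in>Pow S. d T) = d S + (\<Sum>T\<in>Pow S - {S}. d T)"
      using psubset.hyps by (simp add: sum.remove[of _ S])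
    also have "(\<Sum>T\<in>Pow S - {S}. d T) = 0"
      using psubset.IH psubset.prems by (intro sum.neutral) auto
    finally have "d S = (\<Sum>T\<in>Pow A. d T * of_bool (AND_S T S))"
      by (simp add: sum_Pow_AND_S[OF A psubset.prems])
    then show ?case
      using vanish[OF psubset.prems] by simp
  qed
qed

lemma AND_S_expansion_exists:
  fixes F :: "nat set \<Rightarrow> 'a::comm_ring_1"
  assumes A: "finite A"
  shows "\<exists>c. (\<forall>S. \<not> S \<subseteq> A \<longrightarrow> c S = 0) \<and>
    (\<forall>x. x \<subseteq> A \<longrightarrow> F x = (\<Sum>S\<in>Pow A. c S * of_bool (AND_S S x)))"
proof -
  define g where "g S = (\<Sum>T\<in>Pow S. (-1) ^ card T * F T)" for S
  define c where "c S = (if S \<subseteq> A then (-1) ^ card S * g S else 0)" for S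
  have "F x = (\<Sum>S\<in>Pow A. c S * of_bool (AND_S S x))" if x: "x \<subseteq> A" for x
  proof -
    have "finite x"
      using A x finite_subset by blast
    then have "F x = (\<Sum>S\<in>Pow x. (-1) ^ card S * g S)"
      by (rule inclusion_exclusion_symmetric[rotated]) (simp add: g_def)
    also have "\<dots> = (\<Sum>S\<in>Pow x. c S)"
      using x by (intro sum.cong) (auto simp: c_def)
    finally show ?thesis
      by (simp add: sum_Pow_AND_S[OF A x])
  qed
  moreover have "c S = 0" if "\<not> S \<subseteq> A" for S
    using that by (simp add: c_def)
  ultimately show ?thesis
    by blast
qed

lemma mobius_expansion:
  assumes "x \<subseteq> {..<n}"
  shows "of_bool (f x) = (\<Sum>S\<in>Pow {..<n}. mobius_coeff n f S * of_bool (AND_S S x))"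
proof -
  let ?expands = "\<lambda>c. (\<forall>S. \<not> S \<subseteq> {..<n} \<longrightarrow> c S = 0) \<and>
    (\<forall>x. x \<subseteq> {..<n} \<longrightarrow> (of_bool (f x) :: real) = (\<Sum>S\<in>Pow {..<n}. c S * of_bool (AND_S S x)))"
  have "\<exists>!c. ?expands c"
  proof (rule ex_ex1I)
    show "\<exists>c. ?expands c"
      by (rule AND_S_expansion_exists) simp
  next
    fix c c' assume c: "?expands c" and c': "?expands c'"
    have "c S - c' S = 0" if "S \<subseteq> {..<n}" for S
    proof (rule AND_S_combination_eq_0_imp_coeff_eq_0[OF finite_lessThan _ that])
      fix y :: "nat set" assume "y \<subseteq> {..<n}"
      then show "(\<Sum>S\<in>Pow {..<n}. (c S - c' S) * of_bool (AND_S S y)) = 0"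
        using c c' by (simp add: left_diff_distrib sum_subtractf)
    qed
    then show "c = c'"
      using c c' by (metis eq_iff_diff_eq_0 ext)
  qed
  from theI'[OF this] show ?thesis
    using assms unfolding mobius_coeff_def by blast
qed

lemma comp_AND_rows_eq_iff_pattern_eq:
  assumes x: "x \<subseteq> {..<n}" and x': "x' \<subseteq> {..<n}"
  shows "(\<forall>y. y \<subseteq> {..<n} \<longrightarrow> comp_AND f x y = comp_AND f x' y) \<longleftrightarrow>
    pattern n f x = pattern n f x'"
proof -
  let ?c = "mobius_coeff n f"
  have row: "of_bool (comp_AND f z y) =
      (\<Sum>S\<in>Pow {..<n}. ?c S * of_bool (AND_S S z \<and> AND_S S y))"
    if "z \<subseteq> {..<n}" for z y
    using mobius_expansion[of "z \<inter> y" n f] that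
    unfolding comp_AND_def AND_S_def Int_subset_iff by blast
  show ?thesis
  proof
    assume rows: "\<forall>y. y \<subseteq> {..<n} \<longrightarrow> comp_AND f x y = comp_AND f x' y"
    \<comment> \<open>the difference of the two rows is an AND-expansion in y that vanishes identically\<close>
    have coeff_diff: "?c S * (of_bool (AND_S S x) - of_bool (AND_S S x')) = 0"
      if "S \<subseteq> {..<n}" for S
    proof (rule AND_S_combination_eq_0_imp_coeff_eq_0[OF finite_lessThan _ that])
      fix y :: "nat set" assume y: "y \<subseteq> {..<n}"
      have "(\<Sum>S\<in>Pow {..<n}. ?c S * (of_bool (AND_S S x) - of_bool (AND_S S x')) * of_bool (AND_S S y))
          = of_bool (comp_AND f x y) - of_bool (comp_AND f x' y)"
        unfolding row[OF x] row[OF x'] sum_subtractf[symmetric]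
        by (intro sum.cong) (auto simp: algebra_simps)
      then show "(\<Sum>S\<in>Pow {..<n}. ?c S * (of_bool (AND_S S x) - of_bool (AND_S S x')) *
          of_bool (AND_S S y)) = 0"
        using rows y by simp
    qed
    have "AND_S S x = AND_S S x'" if "S \<subseteq> {..<n}" "?c S \<noteq> 0" for S
      using coeff_diff[OF that(1)] that(2) by (simp add: of_bool_eq_iff)
    then show "pattern n f x = pattern n f x'"
      by (auto simp: pattern_def mobius_support_def)
  next
    assume patterns: "pattern n f x = pattern n f x'"
    have "AND_S S x = AND_S S x'" if "S \<subseteq> {..<n}" "?c S \<noteq> 0" for S
      using fun_cong[OF patterns, of S] that by (simp add: pattern_def mobius_support_def)
    then have "(of_bool (comp_AND f x y) :: real) = of_bool (comp_AND f x' y)" for y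
      unfolding row[OF x] row[OF x'] by (intro sum.cong) auto
    then show "\<forall>y. y \<subseteq> {..<n} \<longrightarrow> comp_AND f x y = comp_AND f x' y"
      by (simp add: of_bool_eq_iff)
  qed
qed

lemma card_bool_lists_length: "card {xs :: bool list. length xs = k} = 2 ^ k"
  using card_lists_length_eq[of "UNIV :: bool set" k] by simp

lemma one_way_protocol_imp_card_le:
  assumes classes: "\<And>x x'. x \<subseteq> {..<n} \<Longrightarrow> x' \<subseteq> {..<n} \<Longrightarrow>
      (\<forall>y. y \<subseteq> {..<n} \<longrightarrow> F x y = F x' y) \<Longrightarrow> p x = p x'"
    and "one_way_protocol n F k"
  shows "card (p ` Pow {..<n}) \<le> 2 ^ k"
proof -
  let ?X = "Pow {..<n}"
  obtain M :: "nat set \<Rightarrow> bool list" and B where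
    M: "\<forall>x. x \<subseteq> {..<n} \<longrightarrow> length (M x) = k" and
    B: "\<forall>x y. x \<subseteq> {..<n} \<longrightarrow> y \<subseteq> {..<n} \<longrightarrow> F x y = B (M x) y"
    using \<open>one_way_protocol n F k\<close> unfolding one_way_protocol_def by blast
  have "p x = p (inv_into ?X M (M x))" if x: "x \<in> ?X" for x
  proof -
    let ?x0 = "inv_into ?X M (M x)"
    have "M x \<in> M ` ?X"
      using x by (rule imageI)
    then have "?x0 \<in> ?X" "M ?x0 = M x"
      by (rule inv_into_into, rule f_inv_into_f)
    then show ?thesis
      using x by (intro classes) (simp_all add: B)
  qed
  then have "p ` ?X = (p \<circ> inv_into ?X M) ` M ` ?X"
    unfolding image_comp by (intro image_cong) auto
  then have "card (p ` ?X) \<le> card (M ` ?X)"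
    by (simp add: card_image_le)
  also have "\<dots> \<le> card {xs :: bool list. length xs = k}"
    by (intro card_mono finite_list_length) (auto simp: M)
  finally show ?thesis
    by (simp add: card_bool_lists_length)
qed

lemma one_way_protocol_if_card_le:
  assumes classes: "\<And>x x' y. x \<subseteq> {..<n} \<Longrightarrow> x' \<subseteq> {..<n} \<Longrightarrow> y \<subseteq> {..<n} \<Longrightarrow>
      p x = p x' \<Longrightarrow> F x y = F x' y"
    and "card (p ` Pow {..<n}) \<le> 2 ^ k"
  shows "one_way_protocol n F k"
proof -
  let ?X = "Pow {..<n}"
  obtain g where g: "g ` p ` ?X \<subseteq> {xs :: bool list. length xs = k}" "inj_on g (p ` ?X)"
    using card_le_inj[of "p ` ?X" "{xs :: bool list. length xs = k}"] assms(2)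
    by (auto simp: card_bool_lists_length finite_list_length)
  define M where "M x = g (p x)" for x
  define B where "B m y = F (inv_into ?X M m) y" for m y
  have "F x y = B (M x) y" if x: "x \<subseteq> {..<n}" and y: "y \<subseteq> {..<n}" for x y
  proof -
    let ?x0 = "inv_into ?X M (M x)"
    have "M x \<in> M ` ?X"
      using x by simp
    then have "?x0 \<in> ?X" "M ?x0 = M x"
      by (rule inv_into_into, rule f_inv_into_f)
    then have "p ?x0 = p x"
      using g(2) x by (auto simp: M_def inj_on_def)
    then show ?thesis
      using classes[of ?x0 x y] \<open>?x0 \<in> ?X\<close> x y by (simp add: B_def)
  qed
  moreover have "length (M x) = k" if "x \<subseteq> {..<n}" for x
    using g(1) that by (auto simp: M_def)
  ultimately show ?thesis
    unfolding one_way_protocol_def by blast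
qed

lemma one_way_protocol_iff_card_le:
  assumes "\<And>x x'. x \<subseteq> {..<n} \<Longrightarrow> x' \<subseteq> {..<n} \<Longrightarrow>
      (\<forall>y. y \<subseteq> {..<n} \<longrightarrow> F x y = F x' y) \<longleftrightarrow> p x = p x'"
  shows "one_way_protocol n F k \<longleftrightarrow> card (p ` Pow {..<n}) \<le> 2 ^ k"
proof
  assume "one_way_protocol n F k"
  then show "card (p ` Pow {..<n}) \<le> 2 ^ k"
    by (rule one_way_protocol_imp_card_le[rotated]) (simp add: assms)
next
  assume "card (p ` Pow {..<n}) \<le> 2 ^ k"
  then show "one_way_protocol n F k"
    by (rule one_way_protocol_if_card_le[rotated]) (use assms in blast)
qed

theorem claim4p1:
  fixes n :: nat and f :: "nat set \<Rightarrow> bool"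
  shows "D_oneway n (comp_AND f) = nat \<lceil>log 2 (real (Pat_M n f))\<rceil>"
proof -
  have "Pat_M n f > 0"
    unfolding Pat_M_def by (auto simp: card_gt_0_iff)
  have "one_way_protocol n (comp_AND f) k \<longleftrightarrow> ceillog2 (Pat_M n f) \<le> k" for k
    unfolding ceillog2_le_iff[OF \<open>Pat_M n f > 0\<close>] unfolding Pat_M_def
    by (rule one_way_protocol_iff_card_le) (rule comp_AND_rows_eq_iff_pattern_eq)
  then have "D_oneway n (comp_AND f) = ceillog2 (Pat_M n f)"
    unfolding D_oneway_def by (intro Least_equality) auto
  then show ?thesis
    using \<open>Pat_M n f > 0\<close> by (simp add: ceillog2_def)
qed

end
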